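(* Let $f:\mathbb{R}^n\to\mathbb{R}$ be a continuously differentiable convex function. Let $D_1,\dots,D_p$ and $H_1,\dots,H_p$ be diagonal matrices, each $H_i$ with nonnegative diagonal entries, such that for each $i$, $f(y)\le f(x)+\nabla f(x)^T(y-x)+\tfrac12\|y-x\|_{H_i}^2$ for all $x,y\in\mathbb{R}^n$, and $D_i\succ H_i$. Let $(x_{k,m})_{k\ge1,\,0\le m\le p}$ be generated by the CIWHT method with $\mathcal{D}=(D_1,\dots,D_p)$. Then every limit point $\bar x$ of the sequence of iterates $(x_{k,m})_{k\ge 1,\,1\le m\le p}$ (ordered lexicographically in $(k,m)$) is $D_i$-stationary for every $i=1,\dots,p$.
   Context: $\|z\|_A^2=z^TAz$. $C_s=\{x\in\mathbb{R}^n:\|x\|_0\le s\}$ for a positive integer $s$, where $\|x\|_0$ is the number of nonzero entries. $\mathcal{P}_{C_s}(z)=\operatorname{argmin}_{y\in C_s}\|y-z\|_2^2$ (set-valued). CIWHT (Cyclic Iterative Weighted Hard Thresholding): given an initial point $x_{1,0}\in C_s$; for $k=1,2,\dots$, for $m=1,\dots,p$, pick $y_{k,m}\in\mathcal{P}_{C_s}\big(D_m^{1/2}x_{k,m-1}-D_m^{-1/2}\nabla f(x_{k,m-1})\big)$ and set $x_{k,m}=D_m^{-1/2}y_{k,m}$; then set $x_{k+1,0}=x_{k,p}$. For a diagonal $D\succ0$, a point $x\in C_s$ is $D$-stationary if $x\in D^{-1/2}\mathcal{P}_{C_s}\big(D^{1/2}x-D^{-1/2}\nabla f(x)\big)$.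 *)

theory Defs
  imports "HOL-Analysis.Analysis"
begin

text \<open>Diagonal matrices on R^n are represented by their diagonal, a vector d.\<close>

definition sparse_set :: "nat \<Rightarrow> (real^'n) set" where
  "sparse_set s = {x. card {j. x $ j \<noteq> 0} \<le> s}"

definition proj_sparse :: "nat \<Rightarrow> real^'n \<Rightarrow> (real^'n) set" where
  "proj_sparse s z = {y \<in> sparse_set s. \<forall>y' \<in> sparse_set s. (norm (y - z))\<^sup>2 \<le> (norm (y' - z))\<^sup>2}"

definition dsqrt :: "real^'n \<Rightarrow> real^'n \<Rightarrow> real^'n" where
  "dsqrt d x = (\<chi> j. sqrt (d $ j) * x $ j)"

definition dinvsqrt :: "real^'n \<Rightarrow> real^'n \<Rightarrow> real^'n" where
  "dinvsqrt d x = (\<chi> j. x $ j / sqrt (d $ j))"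

definition wnorm2 :: "real^'n \<Rightarrow> real^'n \<Rightarrow> real" where
  "wnorm2 h z = (\<Sum>j\<in>UNIV. h $ j * (z $ j)\<^sup>2)"

definition D_stationary :: "nat \<Rightarrow> (real^'n \<Rightarrow> real^'n) \<Rightarrow> real^'n \<Rightarrow> real^'n \<Rightarrow> bool" where
  "D_stationary s grad d x \<longleftrightarrow> x \<in> sparse_set s \<and>
     x \<in> dinvsqrt d ` proj_sparse s (dsqrt d x - dinvsqrt d (grad x))"

definition CIWHT_seq :: "nat \<Rightarrow> nat \<Rightarrow> (nat \<Rightarrow> real^'n) \<Rightarrow> (real^'n \<Rightarrow> real^'n)
    \<Rightarrow> (nat \<Rightarrow> nat \<Rightarrow> real^'n) \<Rightarrow> bool" where
  "CIWHT_seq s p D grad x \<longleftrightarrow>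
     x 1 0 \<in> sparse_set s \<and>
     (\<forall>k\<ge>1. \<forall>m\<in>{1..p}. \<exists>y \<in> proj_sparse s
          (dsqrt (D m) (x k (m - 1)) - dinvsqrt (D m) (grad (x k (m - 1)))).
          x k m = dinvsqrt (D m) y) \<and>
     (\<forall>k\<ge>1. x (k + 1) 0 = x k p)"

definition lex_seq :: "nat \<Rightarrow> (nat \<Rightarrow> nat \<Rightarrow> 'a) \<Rightarrow> nat \<Rightarrow> 'a" where
  "lex_seq p x t = x (t div p + 1) (t mod p + 1)"

definition limit_point :: "(nat \<Rightarrow> 'a::metric_space) \<Rightarrow> 'a \<Rightarrow> bool" where
  "limit_point z a \<longleftrightarrow> (\<exists>r. strict_mono r \<and> (z \<circ> r) \<longlonglongrightarrow> a)"

end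

theory Submission
  imports Defs
begin

text \<open>
  In the coordinates D^(1/2) x, a weighted hard thresholding step x \<mapsto> x' with weight D
  is a Euclidean projection onto the s-sparse vectors. Comparing it with the feasible
  point D^(1/2) x gives grad f x \<bullet> (x' - x) + |x' - x|_D^2 / 2 \<le> 0, so the descent
  inequality for H together with D \<succ> H yields f x' + c |x' - x|^2 \<le> f x for a uniform
  c > 0. Along the iterates f therefore decreases and, by continuity at the limit point,
  stays bounded below, so consecutive iterates come together. Near the indices of a
  subsequence converging to the limit point there is then, for each i, a step with weight
  D_i whose two endpoints both converge to it, and the closedness of the projection passes
  the fixed-point relation to the limit.
\<close>

lemma dsqrt_dinvsqrt:
  assumes "\<forall>j. 0 < d $ j"
  shows "dsqrt d (dinvsqrt d x) = x"
  using assms by (simp add: dsqrt_def dinvsqrt_def vec_eq_iff) (metis order_less_irrefl)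

lemma dinvsqrt_dsqrt:
  assumes "\<forall>j. 0 < d $ j"
  shows "dinvsqrt d (dsqrt d x) = x"
  using assms by (simp add: dsqrt_def dinvsqrt_def vec_eq_iff) (metis order_less_irrefl)

lemma dsqrt_diff: "dsqrt d (x - y) = dsqrt d x - dsqrt d y"
  by (simp add: dsqrt_def vec_eq_iff algebra_simps)

lemma norm_dsqrt_squared:
  assumes "\<forall>j. 0 \<le> d $ j"
  shows "(norm (dsqrt d x))\<^sup>2 = wnorm2 d x"
proof -
  have "(sqrt (d $ j) * x $ j) * (sqrt (d $ j) * x $ j) = d $ j * (x $ j)\<^sup>2" for j
    using assms by (simp add: power2_eq_square algebra_simps)
  then show ?thesis
    unfolding power2_norm_eq_inner inner_vec_def wnorm2_def dsqrt_def by simp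
qed

lemma inner_dsqrt_dinvsqrt:
  assumes "\<forall>j. 0 < d $ j"
  shows "dsqrt d x \<bullet> dinvsqrt d y = x \<bullet> y"
proof -
  have "sqrt (d $ j) * x $ j * (y $ j / sqrt (d $ j)) = x $ j * y $ j" for j
    using assms by (simp add: field_simps) (metis order_less_irrefl)
  then show ?thesis
    by (simp add: inner_vec_def dsqrt_def dinvsqrt_def)
qed

lemma dsqrt_in_sparse_set_iff:
  assumes "\<forall>j. 0 < d $ j"
  shows "dsqrt d x \<in> sparse_set s \<longleftrightarrow> x \<in> sparse_set s"
proof -
  have "{j. dsqrt d x $ j \<noteq> 0} = {j. x $ j \<noteq> 0}"
    using assms by (auto simp: dsqrt_def) (metis order_less_irrefl)
  then show ?thesis by (simp add: sparse_set_def)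
qed

lemma dinvsqrt_in_sparse_set_iff:
  assumes "\<forall>j. 0 < d $ j"
  shows "dinvsqrt d x \<in> sparse_set s \<longleftrightarrow> x \<in> sparse_set s"
  using dsqrt_in_sparse_set_iff[OF assms, of "dinvsqrt d x"] by (simp add: dsqrt_dinvsqrt assms)

lemma tendsto_dsqrt [tendsto_intros]:
  "(a \<longlongrightarrow> b) F \<Longrightarrow> ((\<lambda>t. dsqrt d (a t)) \<longlongrightarrow> dsqrt d b) F"
  unfolding dsqrt_def by (intro tendsto_intros)

lemma tendsto_dinvsqrt [tendsto_intros]:
  "(a \<longlongrightarrow> b) F \<Longrightarrow> ((\<lambda>t. dinvsqrt d (a t)) \<longlongrightarrow> dinvsqrt d b) F"
  unfolding dinvsqrt_def divide_inverse by (intro tendsto_intros)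

lemma sparse_set_eq_Union_coordinate_subspaces:
  "sparse_set s = (\<Union>S\<in>{S. card S \<le> s}. {x :: real^'n. \<forall>j. j \<notin> S \<longrightarrow> x $ j = 0})"
proof (intro equalityI subsetI)
  fix x :: "real^'n"
  assume "x \<in> sparse_set s"
  then show "x \<in> (\<Union>S\<in>{S. card S \<le> s}. {x. \<forall>j. j \<notin> S \<longrightarrow> x $ j = 0})"
    by (auto simp: sparse_set_def intro!: bexI[of _ "{j. x $ j \<noteq> 0}"])
next
  fix x :: "real^'n"
  assume "x \<in> (\<Union>S\<in>{S. card S \<le> s}. {x. \<forall>j. j \<notin> S \<longrightarrow> x $ j = 0})"
  then obtain S where "card S \<le> s" and "{j. x $ j \<noteq> 0} \<subseteq> S" by auto
  then have "card {j. x $ j \<noteq> 0} \<le> s"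
    using card_mono[of S] by (meson finite le_trans)
  then show "x \<in> sparse_set s" by (simp add: sparse_set_def)
qed

lemma closed_sparse_set: "closed (sparse_set s)"
  unfolding sparse_set_eq_Union_coordinate_subspaces
  by (intro closed_UN) (auto simp: closed_substandard_cart)

lemma proj_sparse_limit:
  assumes "\<And>t. y t \<in> proj_sparse s (z t)" and "y \<longlonglongrightarrow> a" and "z \<longlonglongrightarrow> b"
  shows "a \<in> proj_sparse s b"
proof -
  have sparse: "y t \<in> sparse_set s" for t
    using assms(1) by (simp add: proj_sparse_def)
  have "a \<in> sparse_set s"
    by (rule closed_sequentially[OF closed_sparse_set sparse assms(2)])
  moreover have "(norm (a - b))\<^sup>2 \<le> (norm (y' - b))\<^sup>2" if "y' \<in> sparse_set s" for y'
  proof (rule LIMSEQ_le)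
    show "(\<lambda>t. (norm (y t - z t))\<^sup>2) \<longlonglongrightarrow> (norm (a - b))\<^sup>2"
      using assms(2,3) by (intro tendsto_intros)
    show "(\<lambda>t. (norm (y' - z t))\<^sup>2) \<longlonglongrightarrow> (norm (y' - b))\<^sup>2"
      using assms(3) by (intro tendsto_intros)
    show "\<exists>N. \<forall>t\<ge>N. (norm (y t - z t))\<^sup>2 \<le> (norm (y' - z t))\<^sup>2"
      using assms(1) that unfolding proj_sparse_def by blast
  qed
  ultimately show ?thesis by (simp add: proj_sparse_def)
qed

definition iwht_step :: "nat \<Rightarrow> (real^'n \<Rightarrow> real^'n) \<Rightarrow> real^'n \<Rightarrow> real^'n \<Rightarrow> real^'n \<Rightarrow> bool" where
  "iwht_step s grad d u v \<longleftrightarrow> v \<in> dinvsqrt d ` proj_sparse s (dsqrt d u - dinvsqrt d (grad u))"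

lemma iwht_step_sparse:
  assumes "\<forall>j. 0 < d $ j" and "iwht_step s grad d u v"
  shows "v \<in> sparse_set s"
  using assms by (auto simp: iwht_step_def proj_sparse_def dinvsqrt_in_sparse_set_iff)

lemma iwht_step_inner_bound:
  assumes d_pos: "\<forall>j. 0 < d $ j" and u: "u \<in> sparse_set s" and step: "iwht_step s grad d u v"
  shows "grad u \<bullet> (v - u) + wnorm2 d (v - u) / 2 \<le> 0"
proof -
  define a where "a = dsqrt d (v - u)"
  define b where "b = dinvsqrt d (grad u)"
  have "dsqrt d v \<in> proj_sparse s (dsqrt d u - b)"
    using step d_pos by (auto simp: iwht_step_def b_def dsqrt_dinvsqrt)
  moreover have "dsqrt d u \<in> sparse_set s"
    using u d_pos by (simp add: dsqrt_in_sparse_set_iff)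
  ultimately have "(norm (dsqrt d v - (dsqrt d u - b)))\<^sup>2 \<le> (norm (dsqrt d u - (dsqrt d u - b)))\<^sup>2"
    unfolding proj_sparse_def by blast
  then have "(norm (a + b))\<^sup>2 \<le> (norm b)\<^sup>2"
    by (simp add: a_def dsqrt_diff algebra_simps)
  moreover have "(norm a)\<^sup>2 = wnorm2 d (v - u)"
    using d_pos by (simp add: a_def norm_dsqrt_squared less_imp_le)
  moreover have "a \<bullet> b = grad u \<bullet> (v - u)"
    unfolding a_def b_def inner_dsqrt_dinvsqrt[OF d_pos] by (rule inner_commute)
  moreover have "(norm (a + b))\<^sup>2 = (norm a)\<^sup>2 + 2 * (a \<bullet> b) + (norm b)\<^sup>2"
    using dot_norm[of a b] by (simp add: field_simps)
  ultimately show ?thesis by linarith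
qed

lemma iwht_step_sufficient_decrease:
  fixes f :: "real^'n \<Rightarrow> real"
  assumes d_pos: "\<forall>j. 0 < d $ j" and u: "u \<in> sparse_set s" and step: "iwht_step s grad d u v"
    and descent: "f v \<le> f u + grad u \<bullet> (v - u) + wnorm2 h (v - u) / 2"
    and gap: "\<forall>j. c \<le> d $ j - h $ j"
  shows "f v + c / 2 * (norm (v - u))\<^sup>2 \<le> f u"
proof -
  have "c * (norm (v - u))\<^sup>2 = (\<Sum>j\<in>UNIV. c * ((v - u) $ j)\<^sup>2)"
    unfolding power2_norm_eq_inner inner_vec_def by (simp add: sum_distrib_left power2_eq_square)
  also have "\<dots> \<le> (\<Sum>j\<in>UNIV. (d $ j - h $ j) * ((v - u) $ j)\<^sup>2)"
    using gap by (intro sum_mono mult_right_mono) simp_all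
  also have "\<dots> = wnorm2 d (v - u) - wnorm2 h (v - u)"
    by (simp add: wnorm2_def left_diff_distrib sum_subtractf)
  finally have "c / 2 * (norm (v - u))\<^sup>2 \<le> wnorm2 d (v - u) / 2 - wnorm2 h (v - u) / 2"
    by simp
  then show ?thesis
    using iwht_step_inner_bound[OF d_pos u step] descent by linarith
qed

lemma iwht_step_limit:
  assumes d_pos: "\<forall>j. 0 < d $ j" and grad_cont: "continuous_on UNIV grad"
    and steps: "\<And>t. iwht_step s grad d (u t) (v t)"
    and u: "u \<longlonglongrightarrow> a" and v: "v \<longlonglongrightarrow> a"
  shows "iwht_step s grad d a a"
proof -
  have proj: "dsqrt d (v t) \<in> proj_sparse s (dsqrt d (u t) - dinvsqrt d (grad (u t)))" for t
    using steps[of t] d_pos by (auto simp: iwht_step_def dsqrt_dinvsqrt)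
  have "(\<lambda>t. grad (u t)) \<longlonglongrightarrow> grad a"
    using grad_cont u by (rule continuous_on_tendsto_compose) auto
  then have "(\<lambda>t. dsqrt d (u t) - dinvsqrt d (grad (u t))) \<longlonglongrightarrow> dsqrt d a - dinvsqrt d (grad a)"
    using u by (intro tendsto_diff tendsto_dsqrt tendsto_dinvsqrt)
  then have "dsqrt d a \<in> proj_sparse s (dsqrt d a - dinvsqrt d (grad a))"
    by (rule proj_sparse_limit[OF proj tendsto_dsqrt[OF v]])
  then show ?thesis
    unfolding iwht_step_def using dinvsqrt_dsqrt[OF d_pos, of a] by force
qed

lemma sufficient_decrease_imp_steps_tendsto_zero:
  fixes w :: "nat \<Rightarrow> 'a::real_normed_vector" and f :: "'a \<Rightarrow> real"
  assumes decrease: "\<And>t. f (w (Suc t)) + c * (norm (w (Suc t) - w t))\<^sup>2 \<le> f (w t)"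
    and c: "0 < c" and r: "strict_mono r" and lim: "(w \<circ> r) \<longlonglongrightarrow> a" and cont: "isCont f a"
  shows "(\<lambda>t. w (Suc t) - w t) \<longlonglongrightarrow> 0"
proof -
  have "f (w (Suc t)) \<le> f (w t)" for t
  proof -
    have "0 \<le> c * (norm (w (Suc t) - w t))\<^sup>2" using c by simp
    then show ?thesis using decrease[of t] by linarith
  qed
  then have dec: "decseq (\<lambda>t. f (w t))" by (rule decseq_SucI)
  have "(\<lambda>j. f (w (r j))) \<longlonglongrightarrow> f a"
    using isCont_tendsto_compose[OF cont lim[unfolded comp_def]] .
  then have bound: "f a \<le> f (w t)" for t
  proof (rule LIMSEQ_le_const2)
    have "f (w (r j)) \<le> f (w t)" if "t \<le> j" for j
      using decseqD[OF dec] seq_suble[OF r, of j] that by simp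
    then show "\<exists>N. \<forall>j\<ge>N. f (w (r j)) \<le> f (w t)" by blast
  qed
  obtain L where "(\<lambda>t. f (w t)) \<longlonglongrightarrow> L"
    using decseq_convergent[OF dec] bound by blast
  then have "(\<lambda>t. (f (w t) - f (w (Suc t))) / c) \<longlonglongrightarrow> (L - L) / c"
    by (intro tendsto_intros LIMSEQ_Suc) (use c in auto)
  then have upper: "(\<lambda>t. (f (w t) - f (w (Suc t))) / c) \<longlonglongrightarrow> 0"
    by simp
  have "(norm (w (Suc t) - w t))\<^sup>2 \<le> (f (w t) - f (w (Suc t))) / c" for t
  proof -
    have "c * (norm (w (Suc t) - w t))\<^sup>2 \<le> f (w t) - f (w (Suc t))"
      using decrease[of t] by linarith
    then show ?thesis by (simp add: pos_le_divide_eq[OF c] mult.commute)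
  qed
  then have "(\<lambda>t. (norm (w (Suc t) - w t))\<^sup>2) \<longlonglongrightarrow> 0"
    by (intro tendsto_sandwich[OF always_eventually always_eventually tendsto_const upper] allI)
      simp_all
  then have "(\<lambda>t. sqrt ((norm (w (Suc t) - w t))\<^sup>2)) \<longlonglongrightarrow> sqrt 0"
    by (rule tendsto_real_sqrt)
  then have "(\<lambda>t. norm (w (Suc t) - w t)) \<longlonglongrightarrow> 0"
    by simp
  then show ?thesis
    by (rule tendsto_norm_zero_cancel)
qed

lemma steps_tendsto_zero_imp_offset_tendsto_zero:
  fixes w :: "nat \<Rightarrow> 'a::real_normed_vector"
  assumes "(\<lambda>t. w (Suc t) - w t) \<longlonglongrightarrow> 0"
  shows "(\<lambda>t. w (t + l) - w t) \<longlonglongrightarrow> 0"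
proof (induction l)
  case 0
  then show ?case by simp
next
  case (Suc l)
  have "(\<lambda>t. w (Suc (t + l)) - w (t + l)) \<longlonglongrightarrow> 0"
    using LIMSEQ_ignore_initial_segment[OF assms, of l] by simp
  from tendsto_add[OF this Suc.IH] show ?case by simp
qed

lemma steps_tendsto_zero_imp_tendsto_nearby:
  fixes w :: "nat \<Rightarrow> 'a::real_normed_vector"
  assumes steps: "(\<lambda>t. w (Suc t) - w t) \<longlonglongrightarrow> 0" and r: "strict_mono r"
    and lim: "(w \<circ> r) \<longlonglongrightarrow> a" and near: "\<And>j. r j \<le> g j \<and> g j \<le> r j + K"
  shows "(w \<circ> g) \<longlonglongrightarrow> a"
proof -
  define e where "e t = (\<Sum>l\<le>K. norm (w (t + l) - w t))" for t
  have "e \<longlonglongrightarrow> 0"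
    unfolding e_def
    by (intro tendsto_null_sum tendsto_norm_zero steps_tendsto_zero_imp_offset_tendsto_zero[OF steps])
  then have e_r: "(e \<circ> r) \<longlonglongrightarrow> 0"
    using r by (rule LIMSEQ_subseq_LIMSEQ)
  have bound: "\<forall>j. norm (w (g j) - w (r j)) \<le> (e \<circ> r) j"
  proof
    fix j
    obtain l where "l \<le> K" and "g j = r j + l"
      using near[of j] by (metis add_le_cancel_left le_add_diff_inverse)
    then show "norm (w (g j) - w (r j)) \<le> (e \<circ> r) j"
      unfolding e_def comp_def \<open>g j = r j + l\<close> by (intro member_le_sum) auto
  qed
  have "(\<lambda>j. w (g j) - w (r j)) \<longlonglongrightarrow> 0"
    by (rule Lim_null_comparison[OF always_eventually[OF bound] e_r])
  from tendsto_add[OF this lim[unfolded comp_def]] show ?thesis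
    by (simp add: comp_def)
qed

lemma exists_mod_eq_in_window:
  fixes n k p :: nat
  assumes "k < p"
  shows "\<exists>t. n \<le> t \<and> t < n + p \<and> t mod p = k"
proof -
  have n: "n div p * p + n mod p = n" and "n mod p < p"
    using assms by simp_all
  show ?thesis
  proof (cases "n mod p \<le> k")
    case True
    have "n \<le> k + n div p * p" "k + n div p * p < n + p"
      using n True \<open>n mod p < p\<close> assms by linarith+
    moreover have "(k + n div p * p) mod p = k"
      using assms by simp
    ultimately show ?thesis by blast
  next
    case False
    have "n \<le> k + n div p * p + p" "k + n div p * p + p < n + p"
      using n False \<open>n mod p < p\<close> assms by linarith+
    moreover have "(k + n div p * p + p) mod p = k"
      using assms by simp
    ultimately show ?thesis by blast
  qed
qed

lemma ex_pos_lower_bound_finite: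
  fixes e :: "'a \<Rightarrow> real"
  assumes "finite I" and "\<And>i. i \<in> I \<Longrightarrow> 0 < e i"
  shows "\<exists>c>0. \<forall>i\<in>I. c \<le> e i"
proof (intro exI conjI ballI)
  show "0 < Min (insert 1 (e ` I))"
    using assms by (simp add: Min_gr_iff)
  show "Min (insert 1 (e ` I)) \<le> e i" if "i \<in> I" for i
    using assms(1) that by (simp add: Min_le_iff)
qed

definition ciwht_path :: "nat \<Rightarrow> (nat \<Rightarrow> nat \<Rightarrow> 'a) \<Rightarrow> nat \<Rightarrow> 'a" where
  "ciwht_path p x t = (case t of 0 \<Rightarrow> x 1 0 | Suc u \<Rightarrow> lex_seq p x u)"

lemma ciwht_path_eq:
  assumes "CIWHT_seq s p D grad x"
  shows "ciwht_path p x t = x (t div p + 1) (t mod p)"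
proof (cases t)
  case 0
  then show ?thesis by (simp add: ciwht_path_def)
next
  case (Suc u)
  show ?thesis
  proof (cases "Suc (u mod p) = p")
    case True
    then have "t mod p = 0" and "t div p = u div p + 1"
      using Suc by (simp_all add: mod_Suc div_Suc)
    then show ?thesis
      using Suc True assms by (simp add: ciwht_path_def lex_seq_def CIWHT_seq_def)
  next
    case False
    then have "t mod p = Suc (u mod p)" and "t div p = u div p"
      using Suc by (simp_all add: mod_Suc div_Suc)
    then show ?thesis
      using Suc by (simp add: ciwht_path_def lex_seq_def)
  qed
qed

lemma ciwht_path_Suc: "ciwht_path p x (Suc t) = x (t div p + 1) (t mod p + 1)"
  by (simp add: ciwht_path_def lex_seq_def)

lemma ciwht_path_step:
  assumes iter: "CIWHT_seq s p D grad x" and p: "1 \<le> p"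
  shows "iwht_step s grad (D (t mod p + 1)) (ciwht_path p x t) (ciwht_path p x (Suc t))"
proof -
  have steps: "\<forall>k\<ge>1. \<forall>m\<in>{1..p}. \<exists>y \<in> proj_sparse s
      (dsqrt (D m) (x k (m - 1)) - dinvsqrt (D m) (grad (x k (m - 1)))). x k m = dinvsqrt (D m) y"
    using iter by (simp add: CIWHT_seq_def)
  have "t mod p + 1 \<in> {1..p}"
    using p by (simp add: Suc_leI)
  with steps[rule_format, of "t div p + 1" "t mod p + 1"] show ?thesis
    unfolding iwht_step_def ciwht_path_Suc ciwht_path_eq[OF iter, of t] by auto
qed

lemma ciwht_path_sparse:
  assumes iter: "CIWHT_seq s p D grad x" and p: "1 \<le> p"
    and D_pos: "\<And>i. i \<in> {1..p} \<Longrightarrow> \<forall>j. 0 < D i $ j"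
  shows "ciwht_path p x t \<in> sparse_set s"
proof (cases t)
  case 0
  then show ?thesis
    using iter by (simp add: ciwht_path_def CIWHT_seq_def)
next
  case (Suc u)
  have "u mod p + 1 \<in> {1..p}"
    using p by (simp add: Suc_leI)
  then show ?thesis
    unfolding Suc by (rule iwht_step_sparse[OF D_pos ciwht_path_step[OF iter p]])
qed

lemma limit_point_imp_ciwht_path_subseq:
  assumes "limit_point (lex_seq p x) a"
  obtains r where "strict_mono r" and "(ciwht_path p x \<circ> r) \<longlonglongrightarrow> a"
proof -
  obtain r where r: "strict_mono r" "(lex_seq p x \<circ> r) \<longlonglongrightarrow> a"
    using assms by (auto simp: limit_point_def)
  have "strict_mono (Suc \<circ> r)"
    using r(1) by (simp add: strict_mono_def)
  moreover have "ciwht_path p x \<circ> (Suc \<circ> r) = lex_seq p x \<circ> r"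
    by (simp add: fun_eq_iff ciwht_path_def)
  ultimately show ?thesis
    using r(2) that by metis
qed

lemma ciwht_path_sufficient_decrease:
  fixes f :: "real^'n \<Rightarrow> real"
  assumes iter: "CIWHT_seq s p D grad x" and p: "1 \<le> p"
    and D_pos: "\<And>i. i \<in> {1..p} \<Longrightarrow> \<forall>j. 0 < D i $ j"
    and descent: "\<And>i u v. i \<in> {1..p} \<Longrightarrow>
        f v \<le> f u + grad u \<bullet> (v - u) + wnorm2 (H i) (v - u) / 2"
    and D_gt_H: "\<And>i j. i \<in> {1..p} \<Longrightarrow> H i $ j < D i $ j"
  obtains c where "0 < c" and "\<And>t. f (ciwht_path p x (Suc t))
      + c * (norm (ciwht_path p x (Suc t) - ciwht_path p x t))\<^sup>2 \<le> f (ciwht_path p x t)"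
proof -
  have "\<exists>c>0. \<forall>ij\<in>{1..p} \<times> UNIV. c \<le> D (fst ij) $ snd ij - H (fst ij) $ snd ij"
    using D_gt_H by (intro ex_pos_lower_bound_finite) auto
  then obtain c where c: "0 < c" and gap: "\<And>i j. i \<in> {1..p} \<Longrightarrow> c \<le> D i $ j - H i $ j"
    by auto
  have index: "t mod p + 1 \<in> {1..p}" for t
    using p by (simp add: Suc_leI)
  have "f (ciwht_path p x (Suc t)) + c / 2 * (norm (ciwht_path p x (Suc t) - ciwht_path p x t))\<^sup>2
      \<le> f (ciwht_path p x t)" for t
    using gap[OF index]
    by (intro iwht_step_sufficient_decrease[OF D_pos[OF index] ciwht_path_sparse[OF iter p D_pos]
          ciwht_path_step[OF iter p] descent[OF index]]) auto
  with c that show ?thesis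
    by (metis half_gt_zero)
qed

lemma cyclic_iwht_limit_fixed_point:
  fixes w :: "nat \<Rightarrow> real^'n"
  assumes grad_cont: "continuous_on UNIV grad" and i: "i \<in> {1..p}"
    and D_pos: "\<forall>j. 0 < D i $ j"
    and step: "\<And>t. iwht_step s grad (D (t mod p + 1)) (w t) (w (Suc t))"
    and steps: "(\<lambda>t. w (Suc t) - w t) \<longlonglongrightarrow> 0" and r: "strict_mono r" and lim: "(w \<circ> r) \<longlonglongrightarrow> a"
  shows "iwht_step s grad (D i) a a"
proof -
  have "\<forall>j. \<exists>t. r j \<le> t \<and> t < r j + p \<and> t mod p = i - 1"
    using i by (intro allI exists_mod_eq_in_window) auto
  then obtain g where g: "\<And>j. r j \<le> g j \<and> g j < r j + p \<and> g j mod p = i - 1"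
    by metis
  have near: "r j \<le> g j \<and> g j \<le> r j + p" "r j \<le> Suc (g j) \<and> Suc (g j) \<le> r j + p" for j
    using g[of j] by auto
  have "iwht_step s grad (D i) (w (g j)) (w (Suc (g j)))" for j
    using step[of "g j"] g[of j] i by simp
  moreover have "(\<lambda>j. w (g j)) \<longlonglongrightarrow> a"
    using steps_tendsto_zero_imp_tendsto_nearby[OF steps r lim near(1)] by (simp add: comp_def)
  moreover have "(\<lambda>j. w (Suc (g j))) \<longlonglongrightarrow> a"
    using steps_tendsto_zero_imp_tendsto_nearby[OF steps r lim near(2)] by (simp add: comp_def)
  ultimately show ?thesis
    by (rule iwht_step_limit[OF D_pos grad_cont])
qed

theorem theorem4p5:
  fixes f :: "real^'n \<Rightarrow> real" and grad :: "real^'n \<Rightarrow> real^'n"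
    and s p :: nat and D H :: "nat \<Rightarrow> real^'n"
    and x :: "nat \<Rightarrow> nat \<Rightarrow> real^'n" and xbar :: "real^'n"
  assumes s_pos: "s \<ge> 1" and p_pos: "p \<ge> 1"
    and grad: "\<And>u. (f has_derivative (\<lambda>h. grad u \<bullet> h)) (at u)"
    and grad_cont: "continuous_on UNIV grad"
    and cvx: "convex_on UNIV f"
    and H_nonneg: "\<And>i j. i \<in> {1..p} \<Longrightarrow> H i $ j \<ge> 0"
    and descent: "\<And>i u v. i \<in> {1..p} \<Longrightarrow>
        f v \<le> f u + grad u \<bullet> (v - u) + wnorm2 (H i) (v - u) / 2"
    and D_gt_H: "\<And>i j. i \<in> {1..p} \<Longrightarrow> D i $ j > H i $ j"
    and iter: "CIWHT_seq s p D grad x"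
    and lim: "limit_point (lex_seq p x) xbar"
  shows "\<forall>i\<in>{1..p}. D_stationary s grad (D i) xbar"
proof -
  have D_pos: "\<forall>j. 0 < D i $ j" if "i \<in> {1..p}" for i
    using H_nonneg[OF that] D_gt_H[OF that] by (meson le_less_trans)
  define w where "w = ciwht_path p x"
  have step: "iwht_step s grad (D (t mod p + 1)) (w t) (w (Suc t))" for t
    unfolding w_def by (rule ciwht_path_step[OF iter p_pos])
  obtain c where "0 < c" and decrease: "\<And>t. f (w (Suc t)) + c * (norm (w (Suc t) - w t))\<^sup>2 \<le> f (w t)"
    using ciwht_path_sufficient_decrease[OF iter p_pos D_pos descent D_gt_H] unfolding w_def by blast
  obtain r where r: "strict_mono r" and lim_r: "(w \<circ> r) \<longlonglongrightarrow> xbar"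
    using limit_point_imp_ciwht_path_subseq[OF lim] unfolding w_def .
  have "isCont f xbar"
    using grad has_derivative_continuous by blast
  then have steps: "(\<lambda>t. w (Suc t) - w t) \<longlonglongrightarrow> 0"
    by (rule sufficient_decrease_imp_steps_tendsto_zero[OF decrease \<open>0 < c\<close> r lim_r])
  have "xbar \<in> sparse_set s"
    using closed_sequentially[OF closed_sparse_set _ lim_r] ciwht_path_sparse[OF iter p_pos D_pos]
    by (simp add: w_def)
  moreover have "iwht_step s grad (D i) xbar xbar" if "i \<in> {1..p}" for i
    by (rule cyclic_iwht_limit_fixed_point[OF grad_cont that D_pos[OF that] step steps r lim_r])
  ultimately show ?thesis
    by (simp add: D_stationary_def iwht_step_def)
qed

end
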